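(* Let $k$ be a field of characteristic zero, $V$ a $k$-vector space, $V_z=V\otimes_kk((z))$, and $\varphi\in\mathrm{End}_k(V)$ finite potent. Then the series $$\exp_z(\varphi)=1+z\varphi+\frac{z^2\varphi^2}{2}+\frac{z^3\varphi^3}{3!}+\cdots$$ defines a well-defined element of $\mathrm{Aut}_{k((z))}(V_z)$, and the endomorphism $\bar\varphi=\exp_z(\varphi)-1=z\varphi+\frac{z^2\varphi^2}{2}+\cdots$ of $V_z$ is finite potent.
   Context: An endomorphism $\psi$ of a vector space $U$ is finite potent if $\psi^nU$ is finite dimensional for some $n$. *)

theory Defs
  imports Main "HOL-Computational_Algebra.Formal_Laurent_Series"
begin

text \<open>A k-vector space V is modelled as a type 'v with a scalar multiplication
  scale :: 'k => 'v => 'v satisfying the locale vector_space (V = UNIV).\<close>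

definition fin_dim :: "('k::field \<Rightarrow> 'v::ab_group_add \<Rightarrow> 'v) \<Rightarrow> 'v set \<Rightarrow> bool" where
  "fin_dim scale W \<longleftrightarrow> (\<exists>B. finite B \<and> W \<subseteq> module.span scale B)"

definition finite_potent :: "('k::field \<Rightarrow> 'v::ab_group_add \<Rightarrow> 'v) \<Rightarrow> ('v \<Rightarrow> 'v) \<Rightarrow> bool" where
  "finite_potent scale \<phi> \<longleftrightarrow> (\<exists>n. fin_dim scale (range (\<phi> ^^ n)))"

text \<open>V_z = V \<otimes>_k k((z)), realised concretely as the formal Laurent series
  sum_n x_n z^n with coefficients x_n in V, which vanish for n sufficiently negative and
  whose coefficients all lie in a finite dimensional subspace of V.\<close>
definition Vz :: "('k::field \<Rightarrow> 'v::ab_group_add \<Rightarrow> 'v) \<Rightarrow> (int \<Rightarrow> 'v) set" where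
  "Vz scale = {x. (\<exists>N. \<forall>n<N. x n = 0) \<and> fin_dim scale (range x)}"

definition lsmult :: "('k::field \<Rightarrow> 'v::ab_group_add \<Rightarrow> 'v) \<Rightarrow> 'k fls \<Rightarrow> (int \<Rightarrow> 'v) \<Rightarrow> (int \<Rightarrow> 'v)" where
  "lsmult scale f x = (\<lambda>n. \<Sum>i\<in>{i. fls_nth f i \<noteq> 0 \<and> x (n - i) \<noteq> 0}. scale (fls_nth f i) (x (n - i)))"

definition lspan :: "('k::field \<Rightarrow> 'v::ab_group_add \<Rightarrow> 'v) \<Rightarrow> (int \<Rightarrow> 'v) set \<Rightarrow> (int \<Rightarrow> 'v) set" where
  "lspan scale B = {x. \<exists>c. x = (\<lambda>n. \<Sum>b\<in>B. lsmult scale (c b) b n)}"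

definition Vz_finite_potent :: "('k::field \<Rightarrow> 'v::ab_group_add \<Rightarrow> 'v) \<Rightarrow> ((int \<Rightarrow> 'v) \<Rightarrow> (int \<Rightarrow> 'v)) \<Rightarrow> bool" where
  "Vz_finite_potent scale \<psi> \<longleftrightarrow>
     (\<exists>m B. finite B \<and> B \<subseteq> Vz scale \<and> (\<psi> ^^ m) ` Vz scale \<subseteq> lspan scale B)"

text \<open>exp_z(phi) = sum_i z^i phi^i / i!, acting coefficientwise:
  (exp_z(phi) x)_n = sum_{i>=0} phi^i (x_{n-i}) / i!  (a finite sum on V_z).\<close>
definition expz :: "('k::field_char_0 \<Rightarrow> 'v::ab_group_add \<Rightarrow> 'v) \<Rightarrow> ('v \<Rightarrow> 'v) \<Rightarrow> (int \<Rightarrow> 'v) \<Rightarrow> (int \<Rightarrow> 'v)" where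
  "expz scale \<phi> x = (\<lambda>n. \<Sum>i\<in>{i::nat. x (n - int i) \<noteq> 0}. scale (1 / fact i) ((\<phi> ^^ i) (x (n - int i))))"

end

theory Submission
  imports Defs
begin

text \<open>Every series in \<open>V\<^sub>z\<close> vanishes below some degree, so each coefficient of
  \<open>exp\<^sub>z(\<phi>) x\<close> is a finite sum, and all coefficients lie in the span of
  \<open>\<phi>\<^sup>m V\<close> and the images under \<open>\<phi>\<^sup>0, \<dots>, \<phi>\<^sup>m\<^sup>-\<^sup>1\<close> of finitely many vectors
  spanning the coefficients of \<open>x\<close>.  The inverse of \<open>exp\<^sub>z(\<phi>)\<close> is \<open>exp\<^sub>z(-\<phi>)\<close>, by
  the identity \<open>\<Sum>\<^sub>a\<^sub>+\<^sub>b\<^sub>=\<^sub>k (-1)\<^sup>a/(a! b!) = 0\<close> for \<open>k > 0\<close>.  Finally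
  \<open>exp\<^sub>z(\<phi>) - 1 = z\<phi> + z\<^sup>2\<phi>\<^sup>2/2 + \<dots>\<close> has a factor \<open>\<phi>\<close>, so every coefficient of
  \<open>(exp\<^sub>z(\<phi>) - 1)\<^sup>m x\<close> lies in the finite dimensional space \<open>\<phi>\<^sup>m V\<close>, and a
  finite spanning set of \<open>\<phi>\<^sup>m V\<close>, placed in degree 0, spans the image over \<open>k((z))\<close>.\<close>

lemma sum_square_eq_sum_antidiagonals:
  fixes g :: "nat \<Rightarrow> nat \<Rightarrow> 'a::comm_monoid_add"
  assumes "\<And>a b. K < a + b \<Longrightarrow> g a b = 0"
  shows "(\<Sum>a\<le>K. \<Sum>b\<le>K. g a b) = (\<Sum>k\<le>K. \<Sum>a\<le>k. g a (k - a))"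
proof -
  have "(\<Sum>a\<le>K. \<Sum>b\<le>K. g a b) = (\<Sum>(a, b)\<in>{..K} \<times> {..K}. g a b)"
    by (simp add: sum.cartesian_product)
  also have "\<dots> = (\<Sum>(a, b)\<in>{(a, b). a + b \<le> K}. g a b)"
    by (rule sum.mono_neutral_right) (auto, meson assms not_le)
  also have "\<dots> = (\<Sum>k\<le>K. \<Sum>a\<le>k. g a (k - a))"
    by (rule sum.triangle_reindex_eq)
  finally show ?thesis .
qed

lemma sum_alternating_inverse_fact:
  "(\<Sum>a\<le>k. (-1) ^ a / (fact a * fact (k - a)) :: 'k::field_char_0) = (if k = 0 then 1 else 0)"
proof -
  have "(\<Sum>a\<le>k. (-1) ^ a / (fact a * fact (k - a)) :: 'k)
      = (\<Sum>a\<le>k. (-1) ^ a * of_nat (k choose a)) / fact k"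
    unfolding sum_divide_distrib
    by (intro sum.cong refl) (simp add: binomial_fact)
  also have "\<dots> = (if k = 0 then 1 else 0)"
    by (simp add: choose_alternating_sum)
  finally show ?thesis .
qed

locale linear_endo = vector_space scale
  for scale :: "'k::field_char_0 \<Rightarrow> 'v::ab_group_add \<Rightarrow> 'v" +
  fixes \<phi> :: "'v \<Rightarrow> 'v"
  assumes linear: "Vector_Spaces.linear scale scale \<phi>"
begin

lemma linear_funpow: "Vector_Spaces.linear scale scale (\<phi> ^^ i)"
proof (induction i)
  case 0
  then show ?case using linear_id by (simp add: id_def)
next
  case (Suc i)
  then show ?case
    using Vector_Spaces.linear_compose[OF Suc linear] by (simp only: funpow.simps)
qed

lemma module_hom_funpow: "module_hom scale scale (\<phi> ^^ i)"
  using linear_funpow by (simp add: module_hom_iff_linear)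

lemma funpow_map_zero [simp]: "(\<phi> ^^ i) 0 = 0"
  using module_hom.zero[OF module_hom_funpow] .

lemma funpow_map_add: "(\<phi> ^^ i) (a + b) = (\<phi> ^^ i) a + (\<phi> ^^ i) b"
  using module_hom.add[OF module_hom_funpow] .

lemma funpow_map_scale: "(\<phi> ^^ i) (scale c a) = scale c ((\<phi> ^^ i) a)"
  using module_hom.scale[OF module_hom_funpow] .

lemma funpow_map_sum: "(\<phi> ^^ i) (sum g S) = (\<Sum>a\<in>S. (\<phi> ^^ i) (g a))"
  using module_hom.sum[OF module_hom_funpow] .

lemma span_funpow_image: "span ((\<phi> ^^ i) ` S) = (\<phi> ^^ i) ` span S"
  using module_hom.span_image[OF module_hom_funpow] .

lemma funpow_image_span_subset:
  assumes "range (\<phi> ^^ m) \<subseteq> span F"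
  shows "(\<phi> ^^ i) ` span E \<subseteq> span (F \<union> (\<Union>j<m. (\<phi> ^^ j) ` E))"
proof (cases "i < m")
  case True
  have "(\<phi> ^^ i) ` span E = span ((\<phi> ^^ i) ` E)"
    by (rule span_funpow_image[symmetric])
  also have "\<dots> \<subseteq> span (F \<union> (\<Union>j<m. (\<phi> ^^ j) ` E))"
    by (rule span_mono) (use True in auto)
  finally show ?thesis .
next
  case False
  then have "\<phi> ^^ i = (\<phi> ^^ m) \<circ> (\<phi> ^^ (i - m))"
    by (metis funpow_add le_add_diff_inverse not_less)
  then have "(\<phi> ^^ i) ` span E \<subseteq> span F"
    using assms by auto
  also have "\<dots> \<subseteq> span (F \<union> (\<Union>j<m. (\<phi> ^^ j) ` E))"
    by (rule span_mono) auto
  finally show ?thesis .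
qed

lemma linear_uminus: "Vector_Spaces.linear scale scale (\<lambda>v. - \<phi> v)"
  using linear vector_space_axioms
  by (auto simp: Vector_Spaces.linear_iff module_hom_iff_linear[symmetric]
      module_hom.add module_hom.scale)

lemma uminus_funpow: "((\<lambda>v. - \<phi> v) ^^ a) v = scale ((-1) ^ a) ((\<phi> ^^ a) v)"
proof (induction a)
  case 0
  then show ?case by simp
next
  case (Suc a)
  then show ?case
    using funpow_map_scale[of 1] by simp
qed

lemma finite_potent_uminus:
  assumes "finite_potent scale \<phi>"
  shows "finite_potent scale (\<lambda>v. - \<phi> v)"
proof -
  obtain m F where "finite F" "range (\<phi> ^^ m) \<subseteq> span F"
    using assms unfolding finite_potent_def fin_dim_def by blast
  then have "range ((\<lambda>v. - \<phi> v) ^^ m) \<subseteq> span F"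
    by (auto simp: uminus_funpow intro: span_scale)
  with \<open>finite F\<close> show ?thesis
    unfolding finite_potent_def fin_dim_def by blast
qed

lemma VzE:
  assumes "x \<in> Vz scale"
  obtains N E where "\<forall>m<N. x m = 0" "finite E" "range x \<subseteq> span E"
  using assms unfolding Vz_def fin_dim_def by auto

lemma VzI:
  assumes "\<forall>m<N. x m = 0" "finite E" "range x \<subseteq> span E"
  shows "x \<in> Vz scale"
  using assms unfolding Vz_def fin_dim_def by auto

lemma Vz_diff:
  assumes "x \<in> Vz scale" "y \<in> Vz scale"
  shows "(\<lambda>n. x n - y n) \<in> Vz scale"
proof -
  obtain N1 E1 where 1: "\<forall>m<N1. x m = 0" "finite E1" "range x \<subseteq> span E1"
    using assms(1) by (rule VzE)
  obtain N2 E2 where 2: "\<forall>m<N2. y m = 0" "finite E2" "range y \<subseteq> span E2"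
    using assms(2) by (rule VzE)
  have "range x \<subseteq> span (E1 \<union> E2)" "range y \<subseteq> span (E1 \<union> E2)"
    using 1 2 span_mono[of E1 "E1 \<union> E2"] span_mono[of E2 "E1 \<union> E2"] by auto
  then have "range (\<lambda>n. x n - y n) \<subseteq> span (E1 \<union> E2)"
    by (auto intro: span_diff)
  moreover have "\<forall>m<min N1 N2. x m - y m = 0"
    using 1 2 by auto
  ultimately show ?thesis
    using 1 2 by (intro VzI[of "min N1 N2"]) auto
qed

lemma expz_eq_sum_atMost:
  assumes "\<forall>m<N. x m = 0" "nat (n - N) \<le> K"
  shows "expz scale \<phi> x n = (\<Sum>i\<le>K. scale (1 / fact i) ((\<phi> ^^ i) (x (n - int i))))"
  unfolding expz_def
proof (rule sum.mono_neutral_left)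
  show "{i. x (n - int i) \<noteq> 0} \<subseteq> {..K}"
  proof
    fix i assume "i \<in> {i. x (n - int i) \<noteq> 0}"
    then have "\<not> n - int i < N" using assms(1) by auto
    then show "i \<in> {..K}" using assms(2) by auto
  qed
qed auto

lemma expz_vanishes_below:
  assumes "\<forall>m<N. x m = 0"
  shows "\<forall>m<N. expz scale \<phi> x m = 0"
  using assms unfolding expz_def by (auto intro!: sum.neutral)

lemma lsmult_eq_sum_interval:
  assumes "\<forall>i<M. fls_nth f i = 0" "\<forall>m<N. x m = 0" "n - N \<le> U"
  shows "lsmult scale f x n = (\<Sum>i\<in>{M..U}. scale (fls_nth f i) (x (n - i)))"
  unfolding lsmult_def
proof (rule sum.mono_neutral_left)
  show "{i. fls_nth f i \<noteq> 0 \<and> x (n - i) \<noteq> 0} \<subseteq> {M..U}"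
  proof clarify
    fix i assume "fls_nth f i \<noteq> 0" "x (n - i) \<noteq> 0"
    then have "\<not> i < M" "\<not> n - i < N" using assms(1,2) by auto
    then show "i \<in> {M..U}" using assms(3) by auto
  qed
qed auto

lemma lsmult_vanishes_below:
  assumes "\<forall>i<M. fls_nth f i = 0" "\<forall>m<N. x m = 0"
  shows "\<forall>m<M + N. lsmult scale f x m = 0"
proof (intro allI impI)
  fix m assume "m < M + N"
  then have "lsmult scale f x m = (\<Sum>i\<in>{M..M - 1}. scale (fls_nth f i) (x (m - i)))"
    by (intro lsmult_eq_sum_interval[OF assms]) simp
  then show "lsmult scale f x m = 0" by simp
qed

subsection \<open>\<open>exp\<^sub>z(\<phi>)\<close> is a \<open>k((z))\<close>-linear automorphism of \<open>V\<^sub>z\<close>\<close>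

lemma expz_in_Vz:
  assumes "finite_potent scale \<phi>" "x \<in> Vz scale"
  shows "expz scale \<phi> x \<in> Vz scale"
proof -
  obtain N E where N: "\<forall>m<N. x m = 0" and E: "finite E" "range x \<subseteq> span E"
    using assms(2) by (rule VzE)
  obtain m F where F: "finite F" "range (\<phi> ^^ m) \<subseteq> span F"
    using assms(1) unfolding finite_potent_def fin_dim_def by blast
  define G where "G = F \<union> (\<Union>j<m. (\<phi> ^^ j) ` E)"
  have "(\<phi> ^^ i) (x n) \<in> span G" for i n
  proof -
    have "x n \<in> span E" using E(2) by auto
    then show ?thesis
      unfolding G_def by (rule subsetD[OF funpow_image_span_subset[OF F(2)] imageI])
  qed
  then have "range (expz scale \<phi> x) \<subseteq> span G"
    unfolding expz_def by (auto intro!: span_sum span_scale)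
  moreover have "finite G"
    using E F by (simp add: G_def)
  ultimately show ?thesis
    by (intro VzI[OF expz_vanishes_below[OF N]])
qed

lemma expz_add:
  assumes "x \<in> Vz scale" "y \<in> Vz scale"
  shows "expz scale \<phi> (\<lambda>n. x n + y n) = (\<lambda>n. expz scale \<phi> x n + expz scale \<phi> y n)"
proof
  fix n
  obtain N1 where "\<forall>m<N1. x m = 0" using assms(1) by (rule VzE)
  moreover obtain N2 where "\<forall>m<N2. y m = 0" using assms(2) by (rule VzE)
  ultimately have x: "\<forall>m<min N1 N2. x m = 0" and y: "\<forall>m<min N1 N2. y m = 0"
    and xy: "\<forall>m<min N1 N2. x m + y m = 0"
    by auto
  show "expz scale \<phi> (\<lambda>n. x n + y n) n = expz scale \<phi> x n + expz scale \<phi> y n"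
    using expz_eq_sum_atMost[OF x order.refl] expz_eq_sum_atMost[OF y order.refl]
      expz_eq_sum_atMost[OF xy order.refl]
    by (simp add: funpow_map_add scale_right_distrib sum.distrib)
qed

lemma expz_lsmult:
  assumes "x \<in> Vz scale"
  shows "expz scale \<phi> (lsmult scale f x) = lsmult scale f (expz scale \<phi> x)"
proof
  fix n
  obtain N where N: "\<forall>m<N. x m = 0" using assms by (rule VzE)
  obtain M where M: "\<forall>i<M. fls_nth f i = 0" using fls_nth_vanishes_belowE by blast
  define I where "I = {M..n - N}"
  define J where "J = {..nat (n - (M + N))}"
  have inner: "lsmult scale f x (n - int j) = (\<Sum>i\<in>I. scale (fls_nth f i) (x (n - int j - i)))"
    for j
    unfolding I_def by (rule lsmult_eq_sum_interval[OF M N]) simp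
  have outer: "expz scale \<phi> x (n - i) = (\<Sum>j\<in>J. scale (1 / fact j) ((\<phi> ^^ j) (x (n - i - int j))))"
    if "i \<in> I" for i
    unfolding J_def by (rule expz_eq_sum_atMost[OF N]) (use that in \<open>auto simp: I_def\<close>)
  have "expz scale \<phi> (lsmult scale f x) n
      = (\<Sum>j\<in>J. scale (1 / fact j) ((\<phi> ^^ j) (lsmult scale f x (n - int j))))"
    unfolding J_def by (rule expz_eq_sum_atMost[OF lsmult_vanishes_below[OF M N]]) simp
  also have "\<dots> = (\<Sum>j\<in>J. \<Sum>i\<in>I. scale (fls_nth f i) (scale (1 / fact j) ((\<phi> ^^ j) (x (n - i - int j)))))"
    by (simp add: inner funpow_map_sum funpow_map_scale scale_sum_right mult.commute diff_diff_eq add.commute)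
  also have "\<dots> = (\<Sum>i\<in>I. scale (fls_nth f i) (expz scale \<phi> x (n - i)))"
    by (subst sum.swap) (simp add: outer scale_sum_right)
  also have "\<dots> = lsmult scale f (expz scale \<phi> x) n"
    unfolding I_def by (rule lsmult_eq_sum_interval[OF M expz_vanishes_below[OF N], symmetric]) simp
  finally show "expz scale \<phi> (lsmult scale f x) n = lsmult scale f (expz scale \<phi> x) n" .
qed

lemma expz_uminus_expz:
  assumes N: "\<forall>m<N. x m = 0"
  shows "expz scale (\<lambda>v. - \<phi> v) (expz scale \<phi> x) = x"
proof
  fix n
  interpret neg: linear_endo scale "\<lambda>v. - \<phi> v"
    using vector_space_axioms linear_uminus by (rule linear_endo.intro[OF _ linear_endo_axioms.intro])
  define K where "K = nat (n - N)"
  define g where "g a b = scale ((-1) ^ a / (fact a * fact b)) ((\<phi> ^^ (a + b)) (x (n - int (a + b))))"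
    for a b
  have "expz scale (\<lambda>v. - \<phi> v) (expz scale \<phi> x) n
      = (\<Sum>a\<le>K. scale (1 / fact a) (((\<lambda>v. - \<phi> v) ^^ a) (expz scale \<phi> x (n - int a))))"
    unfolding K_def by (rule neg.expz_eq_sum_atMost[OF expz_vanishes_below[OF N]]) simp
  also have "\<dots> = (\<Sum>a\<le>K. \<Sum>b\<le>K. g a b)"
  proof (intro sum.cong refl)
    fix a
    have "expz scale \<phi> x (n - int a) = (\<Sum>b\<le>K. scale (1 / fact b) ((\<phi> ^^ b) (x (n - int a - int b))))"
      by (rule expz_eq_sum_atMost[OF N]) (simp add: K_def)
    then show "scale (1 / fact a) (((\<lambda>v. - \<phi> v) ^^ a) (expz scale \<phi> x (n - int a))) = (\<Sum>b\<le>K. g a b)"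
      by (simp add: uminus_funpow funpow_map_sum funpow_map_scale scale_sum_right g_def
          funpow_add diff_diff_eq mult.commute)
  qed
  also have "\<dots> = (\<Sum>k\<le>K. \<Sum>a\<le>k. g a (k - a))"
    by (rule sum_square_eq_sum_antidiagonals) (simp add: g_def K_def N)
  also have "\<dots> = (\<Sum>k\<le>K. scale (\<Sum>a\<le>k. (-1) ^ a / (fact a * fact (k - a))) ((\<phi> ^^ k) (x (n - int k))))"
    by (simp add: g_def scale_sum_left)
  also have "\<dots> = (\<Sum>k\<le>K. if k = 0 then x n else 0)"
    by (intro sum.cong refl) (simp add: sum_alternating_inverse_fact)
  also have "\<dots> = x n"
    by simp
  finally show "expz scale (\<lambda>v. - \<phi> v) (expz scale \<phi> x) n = x n" .
qed

lemma bij_betw_expz: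
  assumes "finite_potent scale \<phi>"
  shows "bij_betw (expz scale \<phi>) (Vz scale) (Vz scale)"
proof (rule bij_betw_byWitness[where f' = "expz scale (\<lambda>v. - \<phi> v)"])
  interpret neg: linear_endo scale "\<lambda>v. - \<phi> v"
    using vector_space_axioms linear_uminus by (rule linear_endo.intro[OF _ linear_endo_axioms.intro])
  show "\<forall>x\<in>Vz scale. expz scale (\<lambda>v. - \<phi> v) (expz scale \<phi> x) = x"
  proof
    fix x assume "x \<in> Vz scale"
    then obtain N where "\<forall>m<N. x m = 0" by (rule VzE)
    then show "expz scale (\<lambda>v. - \<phi> v) (expz scale \<phi> x) = x" by (rule expz_uminus_expz)
  qed
  show "\<forall>x\<in>Vz scale. expz scale \<phi> (expz scale (\<lambda>v. - \<phi> v) x) = x"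
  proof
    fix x assume "x \<in> Vz scale"
    then obtain N where "\<forall>m<N. x m = 0" by (rule VzE)
    then show "expz scale \<phi> (expz scale (\<lambda>v. - \<phi> v) x) = x"
      using neg.expz_uminus_expz by simp
  qed
  show "expz scale \<phi> ` Vz scale \<subseteq> Vz scale"
    using expz_in_Vz[OF assms] by blast
  show "expz scale (\<lambda>v. - \<phi> v) ` Vz scale \<subseteq> Vz scale"
    using neg.expz_in_Vz[OF finite_potent_uminus[OF assms]] by blast
qed

subsection \<open>Finite potency of \<open>exp\<^sub>z(\<phi>) - 1\<close>\<close>

lemma expz_minus_id_in_range_funpow:
  assumes "x \<in> Vz scale" "\<forall>n. x n \<in> range (\<phi> ^^ m)"
  shows "expz scale \<phi> x n - x n \<in> range (\<phi> ^^ Suc m)"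
proof -
  obtain N where N: "\<forall>m<N. x m = 0" using assms(1) by (rule VzE)
  define K where "K = nat (n - N)"
  have "expz scale \<phi> x n = (\<Sum>i\<le>Suc K. scale (1 / fact i) ((\<phi> ^^ i) (x (n - int i))))"
    by (rule expz_eq_sum_atMost[OF N]) (simp add: K_def)
  also have "\<dots> = x n + (\<Sum>i\<le>K. scale (1 / fact (Suc i)) ((\<phi> ^^ Suc i) (x (n - int (Suc i)))))"
    by (subst sum.atMost_Suc_shift) simp
  finally have "expz scale \<phi> x n - x n
      = (\<Sum>i\<le>K. scale (1 / fact (Suc i)) ((\<phi> ^^ Suc i) (x (n - int (Suc i)))))"
    by simp
  also have "\<dots> \<in> span (range (\<phi> ^^ Suc m))"
  proof (intro span_sum span_scale)
    fix i
    obtain w where "x (n - int (Suc i)) = (\<phi> ^^ m) w" using assms(2) by blast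
    then have "(\<phi> ^^ Suc i) (x (n - int (Suc i))) = (\<phi> ^^ Suc m) ((\<phi> ^^ i) w)"
      by (metis add.commute add_Suc_right funpow_add o_apply)
    then show "(\<phi> ^^ Suc i) (x (n - int (Suc i))) \<in> span (range (\<phi> ^^ Suc m))"
      by (simp add: span_base)
  qed
  also have "\<dots> = range (\<phi> ^^ Suc m)"
    using span_funpow_image[of "Suc m" UNIV] by simp
  finally show ?thesis .
qed

lemma funpow_expz_minus_id:
  assumes "finite_potent scale \<phi>" "x \<in> Vz scale"
  shows "((\<lambda>x n. expz scale \<phi> x n - x n) ^^ m) x \<in> Vz scale
    \<and> (\<forall>n. ((\<lambda>x n. expz scale \<phi> x n - x n) ^^ m) x n \<in> range (\<phi> ^^ m))"
proof (induction m)
  case 0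
  then show ?case using assms(2) by simp
next
  case (Suc m)
  then show ?case
    using expz_minus_id_in_range_funpow Vz_diff expz_in_Vz[OF assms(1)] by simp
qed

definition Vz_const :: "'v \<Rightarrow> int \<Rightarrow> 'v" where
  "Vz_const e = (\<lambda>n. if n = 0 then e else 0)"

lemma Vz_const_in_Vz: "Vz_const e \<in> Vz scale"
  by (rule VzI[of 0 _ "{e}"]) (auto simp: Vz_const_def span_zero span_base)

lemma lsmult_Vz_const: "lsmult scale f (Vz_const e) n = scale (fls_nth f n) e"
proof -
  have "lsmult scale f (Vz_const e) n = (\<Sum>i\<in>{n}. scale (fls_nth f i) (Vz_const e (n - i)))"
    unfolding lsmult_def by (rule sum.mono_neutral_left) (auto simp: Vz_const_def)
  then show ?thesis by (simp add: Vz_const_def)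
qed

lemma in_lspan_Vz_const:
  assumes "y \<in> Vz scale" "finite F" "range y \<subseteq> span F"
  shows "y \<in> lspan scale (Vz_const ` F)"
proof -
  obtain N where N: "\<forall>m<N. y m = 0" using assms(1) by (rule VzE)
  have "\<exists>u. y n = (\<Sum>v\<in>F. scale (u v) v) \<and> (y n = 0 \<longrightarrow> u = (\<lambda>_. 0))" for n
    using assms(3) span_finite[OF assms(2)] by (cases "y n = 0") auto
  then obtain u where u: "\<And>n. y n = (\<Sum>v\<in>F. scale (u n v) v)"
    and u0: "\<And>n. y n = 0 \<Longrightarrow> u n = (\<lambda>_. 0)"
    by metis
  define c :: "(int \<Rightarrow> 'v) \<Rightarrow> 'k fls" where "c b = Abs_fls (\<lambda>n. u n (b 0))" for b
  have c: "fls_nth (c (Vz_const e)) n = u n e" for e n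
    unfolding c_def using nth_Abs_fls_lower_bound[of N "\<lambda>n. u n e"] N u0
    by (simp add: Vz_const_def)
  have "inj_on Vz_const F"
    by (rule inj_onI) (metis Vz_const_def)
  then have "y = (\<lambda>n. \<Sum>b\<in>Vz_const ` F. lsmult scale (c b) b n)"
    by (simp add: sum.reindex lsmult_Vz_const c flip: u)
  then show ?thesis
    unfolding lspan_def by blast
qed

lemma Vz_finite_potent_expz_minus_id:
  assumes "finite_potent scale \<phi>"
  shows "Vz_finite_potent scale (\<lambda>x n. expz scale \<phi> x n - x n)"
proof -
  obtain m F where F: "finite F" "range (\<phi> ^^ m) \<subseteq> span F"
    using assms unfolding finite_potent_def fin_dim_def by blast
  have "((\<lambda>x n. expz scale \<phi> x n - x n) ^^ m) ` Vz scale \<subseteq> lspan scale (Vz_const ` F)"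
    using in_lspan_Vz_const[OF _ F(1)] funpow_expz_minus_id[OF assms] F(2) by blast
  moreover have "Vz_const ` F \<subseteq> Vz scale"
    using Vz_const_in_Vz by auto
  ultimately show ?thesis
    unfolding Vz_finite_potent_def using F(1) by blast
qed

end

theorem proposition4p1:
  fixes scale :: "'k::field_char_0 \<Rightarrow> 'v::ab_group_add \<Rightarrow> 'v"
    and \<phi> :: "'v \<Rightarrow> 'v"
  assumes "vector_space scale"
    and "Vector_Spaces.linear scale scale \<phi>"
    and "finite_potent scale \<phi>"
  shows "(\<forall>x\<in>Vz scale. expz scale \<phi> x \<in> Vz scale)
    \<and> (\<forall>x\<in>Vz scale. \<forall>y\<in>Vz scale.
          expz scale \<phi> (\<lambda>n. x n + y n) = (\<lambda>n. expz scale \<phi> x n + expz scale \<phi> y n))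
    \<and> (\<forall>f. \<forall>x\<in>Vz scale. expz scale \<phi> (lsmult scale f x) = lsmult scale f (expz scale \<phi> x))
    \<and> bij_betw (expz scale \<phi>) (Vz scale) (Vz scale)
    \<and> Vz_finite_potent scale (\<lambda>x n. expz scale \<phi> x n - x n)"
proof -
  interpret linear_endo scale \<phi>
    using assms(1,2) by (rule linear_endo.intro[OF _ linear_endo_axioms.intro])
  show ?thesis
    using expz_in_Vz expz_add expz_lsmult bij_betw_expz Vz_finite_potent_expz_minus_id assms(3)
    by blast
qed

end
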